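(* Let $G = N \rtimes H$ with $N,H$ finite abelian. For each $H$-orbit $\mathcal{O}_\alpha = \{v_1,\dots,v_{c_\alpha}\}$ in $P_N$ with stabilizer $H_\alpha$ and idempotent eigenbasis $\{u^{[\alpha]}_1,\dots,u^{[\alpha]}_{|H_\alpha|}\}$ of $\mathbb{C}[H_\alpha]$, let $J^{[\alpha]}_p = \sum_{i=1}^{c_\alpha} v_iu^{[\alpha]}_p$. Then the set $\{J^{[\alpha]}_p : \alpha \text{ an orbit}, 1\le p\le |H_\alpha|\}$ is exactly the set of primitive central idempotents of $\mathbb{C}[G]$.
   Context: $N$ is normal in $G$, $H$ acts on $N$ by conjugation. For a finite abelian group $K$, the idempotent eigenbasis of $\mathbb{C}[K]$ is the unique basis of $\mathbb{C}[K]$ consisting of simultaneous eigenvectors of left multiplication by elements of $\mathbb{C}[K]$ and consisting of pairwise orthogonal idempotents. $P_N$ is the idempotent eigenbasis of $\mathbb{C}[N]$; conjugation by $H$ permutes $P_N$; $H_\alpha$ is the common stabilizer in $H$ of the elements of $\mathcal{O}_\alpha$. A primitive central idempotent of an algebra $A$ is a nonzero central idempotent $J$ that cannot be written as $J=I_1+I_2$ with $I_1,I_2$ nonzero central idempotents satisfying $I_1I_2=I_2I_1=0$. *)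

theory Defs
  imports Complex_Main "HOL-Algebra.Algebra"
begin

text \<open>The complex group algebra of a finite group G is modelled as the set of functions
  carrier G \<Rightarrow> complex (zero outside the carrier); multiplication is convolution.
  For a subgroup K of G, the group algebra C[K] is identified with the subalgebra of
  functions supported on K.\<close>

definition grp_alg :: "'a set \<Rightarrow> ('a \<Rightarrow> complex) set" where
  "grp_alg K = {f. \<forall>x. x \<notin> K \<longrightarrow> f x = 0}"

definition conv :: "('a, 'b) monoid_scheme \<Rightarrow> ('a \<Rightarrow> complex) \<Rightarrow> ('a \<Rightarrow> complex) \<Rightarrow> ('a \<Rightarrow> complex)" where
  "conv G f g = (\<lambda>x. if x \<in> carrier G
       then (\<Sum>y\<in>carrier G. f y * g (inv\<^bsub>G\<^esub> y \<otimes>\<^bsub>G\<^esub> x)) else 0)"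

definition delta :: "'a \<Rightarrow> ('a \<Rightarrow> complex)" where
  "delta g = (\<lambda>x. if x = g then 1 else 0)"

definition conj_alg :: "('a, 'b) monoid_scheme \<Rightarrow> 'a \<Rightarrow> ('a \<Rightarrow> complex) \<Rightarrow> ('a \<Rightarrow> complex)" where
  "conj_alg G h f = conv G (conv G (delta h) f) (delta (inv\<^bsub>G\<^esub> h))"

definition lin_comb :: "('a \<Rightarrow> complex) set \<Rightarrow> (('a \<Rightarrow> complex) \<Rightarrow> complex) \<Rightarrow> ('a \<Rightarrow> complex)" where
  "lin_comb B c = (\<lambda>x. \<Sum>b\<in>B. c b * b x)"

definition is_basis_alg :: "'a set \<Rightarrow> ('a \<Rightarrow> complex) set \<Rightarrow> bool" where
  "is_basis_alg K B \<longleftrightarrow> finite B \<and> B \<subseteq> grp_alg K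
     \<and> (\<forall>c. lin_comb B c = (\<lambda>_. 0) \<longrightarrow> (\<forall>b\<in>B. c b = 0))
     \<and> (\<forall>f\<in>grp_alg K. \<exists>c. f = lin_comb B c)"

definition is_idem_eigenbasis :: "('a, 'b) monoid_scheme \<Rightarrow> 'a set \<Rightarrow> ('a \<Rightarrow> complex) set \<Rightarrow> bool" where
  "is_idem_eigenbasis G K B \<longleftrightarrow> is_basis_alg K B
     \<and> (\<forall>b\<in>B. \<forall>a\<in>grp_alg K. \<exists>e::complex. conv G a b = (\<lambda>x. e * b x))
     \<and> (\<forall>b\<in>B. conv G b b = b)
     \<and> (\<forall>b\<in>B. \<forall>b'\<in>B. b \<noteq> b' \<longrightarrow> conv G b b' = (\<lambda>_. 0))"

text \<open>the (unique) idempotent eigenbasis of C[K]\<close>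
definition idem_eigenbasis :: "('a, 'b) monoid_scheme \<Rightarrow> 'a set \<Rightarrow> ('a \<Rightarrow> complex) set" where
  "idem_eigenbasis G K = (THE B. is_idem_eigenbasis G K B)"

definition conj_orbit :: "('a, 'b) monoid_scheme \<Rightarrow> 'a set \<Rightarrow> ('a \<Rightarrow> complex) \<Rightarrow> ('a \<Rightarrow> complex) set" where
  "conj_orbit G H v = (\<lambda>h. conj_alg G h v) ` H"

definition conj_orbits :: "('a, 'b) monoid_scheme \<Rightarrow> 'a set \<Rightarrow> 'a set \<Rightarrow> ('a \<Rightarrow> complex) set set" where
  "conj_orbits G N H = conj_orbit G H ` idem_eigenbasis G N"

definition orbit_stab :: "('a, 'b) monoid_scheme \<Rightarrow> 'a set \<Rightarrow> ('a \<Rightarrow> complex) set \<Rightarrow> 'a set" where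
  "orbit_stab G H Orb = {h \<in> H. \<forall>v\<in>Orb. conj_alg G h v = v}"

definition central_idem :: "('a, 'b) monoid_scheme \<Rightarrow> ('a \<Rightarrow> complex) \<Rightarrow> bool" where
  "central_idem G J \<longleftrightarrow> J \<in> grp_alg (carrier G) \<and> conv G J J = J
     \<and> (\<forall>a\<in>grp_alg (carrier G). conv G a J = conv G J a)"

definition primitive_central_idem :: "('a, 'b) monoid_scheme \<Rightarrow> ('a \<Rightarrow> complex) \<Rightarrow> bool" where
  "primitive_central_idem G J \<longleftrightarrow> central_idem G J \<and> J \<noteq> (\<lambda>_. 0)
     \<and> \<not> (\<exists>I1 I2. central_idem G I1 \<and> central_idem G I2 \<and> I1 \<noteq> (\<lambda>_. 0) \<and> I2 \<noteq> (\<lambda>_. 0)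
            \<and> conv G I1 I2 = (\<lambda>_. 0) \<and> conv G I2 I1 = (\<lambda>_. 0)
            \<and> J = (\<lambda>x. I1 x + I2 x))"

end

theory Submission
  imports Defs "HOL-Library.Function_Algebras"
begin

section \<open>Primitive roots of unity\<close>

definition prim_root :: "nat \<Rightarrow> complex \<Rightarrow> bool" where
  "prim_root m \<omega> \<longleftrightarrow> \<omega> ^ m = 1 \<and> (\<forall>j. 0 < j \<and> j < m \<longrightarrow> \<omega> ^ j \<noteq> 1)"

lemma prim_root_exists:
  assumes "m > 0"
  shows "\<exists>\<omega>. prim_root m \<omega>"
  unfolding prim_root_def
proof (intro exI conjI allI impI)
  let ?w = "cis (2 * pi / real m)"
  show "?w ^ m = 1" using assms by (simp add: DeMoivre)
  fix j assume j: "0 < j \<and> j < m"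
  show "?w ^ j \<noteq> 1"
  proof
    assume "?w ^ j = 1"
    hence "cos (real j * (2 * pi / real m)) = 1" by (simp add: DeMoivre complex_eq_iff)
    then obtain n :: int where "real j * (2 * pi / real m) = real_of_int n * 2 * pi"
      using cos_one_2pi_int by blast
    hence "real j = n * real m" using assms by (simp add: field_simps)
    hence jn: "int j = n * int m" by (metis of_int_eq_iff of_int_mult of_int_of_nat_eq)
    moreover have "n > 0" using j jn by (smt (verit) mult_nonpos_nonneg of_nat_0_le_iff of_nat_0_less_iff)
    ultimately have "int j \<ge> int m" by (simp add: mult_le_cancel_right1 mult.commute)
    thus False using j by simp
  qed
qed

lemma prim_root_nonzero: "prim_root m \<omega> \<Longrightarrow> m > 0 \<Longrightarrow> \<omega> \<noteq> 0"
  by (auto simp: prim_root_def power_0_left)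

lemma prim_root_pow_inj:
  assumes \<omega>: "prim_root m \<omega>" and i: "i < m" "i' < m" and eq: "\<omega> ^ i = \<omega> ^ i'"
  shows "i = i'"
proof -
  have w0: "\<omega> \<noteq> 0" using prim_root_nonzero[OF \<omega>] i by simp
  have less: False if "j < l" "l < m" "\<omega> ^ j = \<omega> ^ l" for j l
  proof -
    have "\<omega> ^ l = \<omega> ^ j * \<omega> ^ (l - j)" using that(1) by (simp add: power_add[symmetric])
    hence "\<omega> ^ (l - j) = 1" using that(3) w0 by simp
    thus False using \<omega> that(1,2) unfolding prim_root_def by simp
  qed
  show ?thesis using less[of i i'] less[of i' i] i eq by (cases i i' rule: linorder_cases) auto
qed

lemma pow_root_of_unity: "(\<omega>::complex) ^ m = 1 \<Longrightarrow> (\<omega> ^ a) ^ m = 1"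
  by (metis power_mult mult.commute power_one)

lemma root_of_unity_geometric_sum:
  assumes "(q::complex) ^ m = 1" "q \<noteq> 1"
  shows "(\<Sum>j<m. q ^ j) = 0"
  using assms by (simp add: geometric_sum)

section \<open>The complex group algebra\<close>

definition abelian :: "('a, 'b) monoid_scheme \<Rightarrow> 'a set \<Rightarrow> bool" where
  "abelian G K \<longleftrightarrow> (\<forall>x\<in>K. \<forall>y\<in>K. x \<otimes>\<^bsub>G\<^esub> y = y \<otimes>\<^bsub>G\<^esub> x)"

definition smul :: "complex \<Rightarrow> ('a \<Rightarrow> complex) \<Rightarrow> ('a \<Rightarrow> complex)" where
  "smul c f = (\<lambda>x. c * f x)"

lemma smul_apply [simp]: "smul c f x = c * f x" by (simp add: smul_def)
lemma smul_smul [simp]: "smul a (smul b f) = smul (a * b) f" by (rule ext) simp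
lemma smul_one [simp]: "smul 1 f = f" by (rule ext) simp
lemma smul_zero [simp]: "smul 0 f = 0" by (rule ext) simp
lemma smul_zero_right [simp]: "smul c 0 = 0" by (rule ext) simp

lemma smul_cancel: "f \<noteq> 0 \<Longrightarrow> smul c f = smul d f \<Longrightarrow> c = d"
  by (auto simp: fun_eq_iff)

lemma sum_fun_apply: "(\<Sum>i\<in>I. F i) x = (\<Sum>i\<in>I. F i x)"
  by (induction I rule: infinite_finite_induct) auto

lemma smul_sum: "smul c (\<Sum>i\<in>I. F i) = (\<Sum>i\<in>I. smul c (F i))"
  by (rule ext) (simp add: sum_fun_apply sum_distrib_left)

lemma sum_smul: "(\<Sum>i\<in>I. smul (c i) f) = smul (\<Sum>i\<in>I. c i) f"
  by (rule ext) (simp add: sum_fun_apply sum_distrib_right)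

lemma sum_nonzero_term: "(\<Sum>i\<in>I. F i) \<noteq> 0 \<Longrightarrow> \<exists>i\<in>I. F i \<noteq> 0"
  by (metis sum.neutral)

lemma sum_single:
  assumes "finite B" "b \<in> B" "\<And>x. x \<in> B \<Longrightarrow> x \<noteq> b \<Longrightarrow> F x = 0"
  shows "(\<Sum>x\<in>B. F x) = F b"
proof -
  have "(\<Sum>x\<in>B. F x) = F b + (\<Sum>x\<in>B - {b}. F x)" using assms(1,2) by (rule sum.remove)
  also have "(\<Sum>x\<in>B - {b}. F x) = 0" using assms(3) by (intro sum.neutral) auto
  finally show ?thesis by simp
qed

lemma lin_comb_eq: "lin_comb B c = (\<Sum>b\<in>B. smul (c b) b)"
  by (rule ext) (simp add: lin_comb_def sum_fun_apply)

lemma grp_alg_diff: "f \<in> grp_alg K \<Longrightarrow> g \<in> grp_alg K \<Longrightarrow> f - g \<in> grp_alg K"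
  and grp_alg_smul: "f \<in> grp_alg K \<Longrightarrow> smul c f \<in> grp_alg K"
  and grp_alg_sum: "(\<And>i. i \<in> I \<Longrightarrow> F i \<in> grp_alg K) \<Longrightarrow> (\<Sum>i\<in>I. F i) \<in> grp_alg K"
  and grp_alg_mono: "K \<subseteq> L \<Longrightarrow> f \<in> grp_alg K \<Longrightarrow> f \<in> grp_alg L"
  and delta_grp_alg: "k \<in> K \<Longrightarrow> delta k \<in> grp_alg K"
  by (auto simp: grp_alg_def sum_fun_apply delta_def)

lemma expand_deltas:
  assumes "finite K" "f \<in> grp_alg K"
  shows "f = (\<Sum>k\<in>K. smul (f k) (delta k))"
proof
  fix x
  have "(\<Sum>k\<in>K. smul (f k) (delta k)) x = (\<Sum>k\<in>K. if x = k then f k else 0)"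
    unfolding sum_fun_apply by (intro sum.cong) (auto simp: delta_def)
  also have "\<dots> = f x" using assms by (subst sum.delta') (auto simp: grp_alg_def)
  finally show "f x = (\<Sum>k\<in>K. smul (f k) (delta k)) x" by simp
qed

locale group_algebra = group G for G :: "('a, 'b) monoid_scheme" (structure) +
  assumes fin: "finite (carrier G)"
begin

abbreviation conv_op (infixl "\<star>" 70) where "f \<star> g \<equiv> conv G f g"

abbreviation CG where "CG \<equiv> grp_alg (carrier G)"

lemma conv_in: "x \<in> carrier G \<Longrightarrow> (f \<star> g) x = (\<Sum>y\<in>carrier G. f y * g (inv y \<otimes> x))"
  and conv_out: "x \<notin> carrier G \<Longrightarrow> (f \<star> g) x = 0"
  by (simp_all add: conv_def)

lemma conv_CG: "f \<star> g \<in> CG" by (simp add: grp_alg_def conv_out)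

lemma sum_translate:
  assumes "z \<in> carrier G"
  shows "(\<Sum>y\<in>carrier G. F y) = (\<Sum>w\<in>carrier G. F (z \<otimes> w))"
proof -
  have "bij_betw (\<lambda>w. z \<otimes> w) (carrier G) (carrier G)"
  proof (rule bij_betw_imageI)
    show "inj_on (\<lambda>w. z \<otimes> w) (carrier G)" using assms by (auto intro: inj_onI)
    have "y = z \<otimes> (inv z \<otimes> y)" if "y \<in> carrier G" for y
      using that assms by (simp add: m_assoc[symmetric])
    thus "(\<lambda>w. z \<otimes> w) ` carrier G = carrier G" using assms by fastforce
  qed
  thus ?thesis by (rule sum.reindex_bij_betw[symmetric])
qed

lemma conv_assoc: "(f \<star> g) \<star> h = f \<star> (g \<star> h)"
proof
  fix x
  show "((f \<star> g) \<star> h) x = (f \<star> (g \<star> h)) x"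
  proof (cases "x \<in> carrier G")
    case False thus ?thesis by (simp add: conv_out)
  next
    case x: True
    have "((f \<star> g) \<star> h) x = (\<Sum>y\<in>carrier G. (\<Sum>z\<in>carrier G. f z * g (inv z \<otimes> y)) * h (inv y \<otimes> x))"
      using x by (simp add: conv_in)
    also have "\<dots> = (\<Sum>z\<in>carrier G. \<Sum>y\<in>carrier G. f z * g (inv z \<otimes> y) * h (inv y \<otimes> x))"
      unfolding sum_distrib_right by (rule sum.swap)
    also have "\<dots> = (\<Sum>z\<in>carrier G. \<Sum>w\<in>carrier G. f z * g w * h (inv w \<otimes> (inv z \<otimes> x)))"
    proof (rule sum.cong[OF refl])
      fix z assume z: "z \<in> carrier G"
      have "(\<Sum>y\<in>carrier G. f z * g (inv z \<otimes> y) * h (inv y \<otimes> x))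
          = (\<Sum>w\<in>carrier G. f z * g (inv z \<otimes> (z \<otimes> w)) * h (inv (z \<otimes> w) \<otimes> x))"
        using z by (rule sum_translate)
      also have "\<dots> = (\<Sum>w\<in>carrier G. f z * g w * h (inv w \<otimes> (inv z \<otimes> x)))"
      proof (intro sum.cong refl)
        fix w assume w: "w \<in> carrier G"
        have "inv z \<otimes> (z \<otimes> w) = w" using z w by (simp add: m_assoc[symmetric])
        moreover have "inv (z \<otimes> w) \<otimes> x = inv w \<otimes> (inv z \<otimes> x)"
          using z w x by (simp add: inv_mult_group m_assoc)
        ultimately show "f z * g (inv z \<otimes> (z \<otimes> w)) * h (inv (z \<otimes> w) \<otimes> x)
            = f z * g w * h (inv w \<otimes> (inv z \<otimes> x))" by (simp only:)
      qed
      finally show "(\<Sum>y\<in>carrier G. f z * g (inv z \<otimes> y) * h (inv y \<otimes> x))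
          = (\<Sum>w\<in>carrier G. f z * g w * h (inv w \<otimes> (inv z \<otimes> x)))" .
    qed
    also have "\<dots> = (f \<star> (g \<star> h)) x"
      using x by (simp add: conv_in sum_distrib_left mult.assoc)
    finally show ?thesis .
  qed
qed

lemma conv_delta_left:
  assumes "a \<in> carrier G" "x \<in> carrier G"
  shows "(delta a \<star> f) x = f (inv a \<otimes> x)"
proof -
  have "(delta a \<star> f) x = (\<Sum>y\<in>carrier G. if y = a then f (inv y \<otimes> x) else 0)"
    unfolding conv_in[OF assms(2)] by (intro sum.cong) (auto simp: delta_def)
  also have "\<dots> = f (inv a \<otimes> x)" using assms fin by (subst sum.delta) auto
  finally show ?thesis .
qed

lemma conv_delta_right:
  assumes "a \<in> carrier G" "x \<in> carrier G"
  shows "(f \<star> delta a) x = f (x \<otimes> inv a)"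
proof -
  have "(f \<star> delta a) x = (\<Sum>y\<in>carrier G. if y = x \<otimes> inv a then f y else 0)"
    unfolding conv_in[OF assms(2)] delta_def
  proof (intro sum.cong refl)
    fix y assume y: "y \<in> carrier G"
    have "(inv y \<otimes> x = a) = (y = x \<otimes> inv a)"
      using y assms by (metis inv_solve_left inv_solve_right inv_closed)
    thus "f y * (if inv y \<otimes> x = a then 1 else 0) = (if y = x \<otimes> inv a then f y else 0)"
      by simp
  qed
  also have "\<dots> = f (x \<otimes> inv a)" using assms fin by (subst sum.delta) auto
  finally show ?thesis .
qed

lemma delta_mult:
  assumes "a \<in> carrier G" "b \<in> carrier G"
  shows "delta a \<star> delta b = delta (a \<otimes> b)"
proof
  fix x show "(delta a \<star> delta b) x = delta (a \<otimes> b) x"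
  proof (cases "x \<in> carrier G")
    case False
    hence "x \<noteq> a \<otimes> b" using assms by auto
    thus ?thesis using False by (simp add: conv_out) (simp add: delta_def)
  next
    case True
    have "(inv a \<otimes> x = b) = (x = a \<otimes> b)" using True assms by (metis inv_solve_left m_closed)
    thus ?thesis using True assms by (simp add: conv_delta_left) (simp add: delta_def)
  qed
qed

lemma delta_one_nonzero: "delta \<one> \<noteq> 0"
  by (auto simp: fun_eq_iff delta_def)

lemma conv_one_left: "f \<in> CG \<Longrightarrow> delta \<one> \<star> f = f"
  and conv_one_right: "f \<in> CG \<Longrightarrow> f \<star> delta \<one> = f"
  by (rule ext, case_tac "x \<in> carrier G", auto simp: conv_delta_left conv_delta_right conv_out grp_alg_def)+

lemma conv_add_left: "(f + g) \<star> h = f \<star> h + g \<star> h"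
  by (rule ext, case_tac "x \<in> carrier G") (auto simp: conv_in conv_out distrib_right sum.distrib)

lemma conv_add_right: "h \<star> (f + g) = h \<star> f + h \<star> g"
  by (rule ext, case_tac "x \<in> carrier G") (auto simp: conv_in conv_out distrib_left sum.distrib)

lemma conv_diff_left: "(f - g) \<star> h = f \<star> h - g \<star> h"
  by (rule ext, case_tac "x \<in> carrier G") (auto simp: conv_in conv_out left_diff_distrib sum_subtractf)

lemma conv_diff_right: "h \<star> (f - g) = h \<star> f - h \<star> g"
  by (rule ext, case_tac "x \<in> carrier G") (auto simp: conv_in conv_out right_diff_distrib sum_subtractf)

lemma conv_smul_left: "smul c f \<star> h = smul c (f \<star> h)"
  by (rule ext, case_tac "x \<in> carrier G") (auto simp: conv_in conv_out sum_distrib_left mult.assoc)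

lemma conv_smul_right: "h \<star> smul c f = smul c (h \<star> f)"
  by (rule ext, case_tac "x \<in> carrier G") (auto simp: conv_in conv_out sum_distrib_left mult.left_commute)

text \<open>Zero is absorbing, for both spellings of the zero function.\<close>
lemma conv_zero_left [simp]: "0 \<star> h = 0"
  and conv_zero_right [simp]: "h \<star> 0 = 0"
  by (rule ext, case_tac "x \<in> carrier G", auto simp: conv_in conv_out)+

lemma conv_zero_fun_left [simp]: "(\<lambda>_. 0) \<star> h = (\<lambda>_. 0)"
  and conv_zero_fun_right [simp]: "h \<star> (\<lambda>_. 0) = (\<lambda>_. 0)"
  using conv_zero_left conv_zero_right by (simp_all add: zero_fun_def)

lemma conv_sum_left: "(\<Sum>i\<in>I. F i) \<star> h = (\<Sum>i\<in>I. F i \<star> h)"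
proof (induction I rule: infinite_finite_induct)
  case (insert i J) thus ?case by (simp only: sum.insert[OF insert(1,2)] conv_add_left insert(3))
qed auto

lemma conv_sum_right: "h \<star> (\<Sum>i\<in>I. F i) = (\<Sum>i\<in>I. h \<star> F i)"
proof (induction I rule: infinite_finite_induct)
  case (insert i J) thus ?case by (simp only: sum.insert[OF insert(1,2)] conv_add_right insert(3))
qed auto

lemma conv_swap_middle:
  assumes "b \<star> c = c \<star> b"
  shows "(a \<star> b) \<star> (c \<star> d) = (a \<star> c) \<star> (b \<star> d)"
proof -
  have "(a \<star> b) \<star> (c \<star> d) = a \<star> ((b \<star> c) \<star> d)" by (simp only: conv_assoc)
  also have "\<dots> = (a \<star> c) \<star> (b \<star> d)" by (simp only: assms conv_assoc)
  finally show ?thesis .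
qed

lemma smul_idem_cases:
  assumes J: "J \<noteq> 0" and JJ: "J \<star> J = J" and eq: "smul \<mu> J \<star> smul \<mu> J = smul \<mu> J"
  shows "\<mu> = 0 \<or> \<mu> = 1"
proof -
  have "smul (\<mu> * \<mu>) J = smul \<mu> J" using eq JJ by (simp add: conv_smul_left conv_smul_right)
  hence "\<mu> * \<mu> = \<mu>" by (rule smul_cancel[OF J])
  thus ?thesis by (metis mult_cancel_left1)
qed

lemma subgroup_finite: "subgroup K G \<Longrightarrow> finite K"
  using fin subgroup.subset finite_subset by blast

lemma grp_alg_CG: "subgroup K G \<Longrightarrow> f \<in> grp_alg K \<Longrightarrow> f \<in> CG"
  using grp_alg_mono subgroup.subset by blast

lemma conv_grp_alg:
  assumes "subgroup K G" "f \<in> grp_alg K" "g \<in> grp_alg K"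
  shows "f \<star> g \<in> grp_alg K"
  unfolding grp_alg_def mem_Collect_eq
proof (intro allI impI)
  fix x assume x: "x \<notin> K"
  show "(f \<star> g) x = 0"
  proof (cases "x \<in> carrier G")
    case False thus ?thesis by (simp add: conv_out)
  next
    case True
    have "f y * g (inv y \<otimes> x) = 0" if y: "y \<in> carrier G" for y
    proof (cases "y \<in> K \<and> inv y \<otimes> x \<in> K")
      case True
      hence "y \<otimes> (inv y \<otimes> x) \<in> K" using assms(1) by (simp add: subgroup.m_closed)
      hence "x \<in> K" using y \<open>x \<in> carrier G\<close> by (simp add: m_assoc[symmetric])
      thus ?thesis using x by simp
    next
      case False thus ?thesis using assms(2,3) by (auto simp: grp_alg_def)
    qed
    thus ?thesis using True by (simp add: conv_in sum.neutral)
  qed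
qed

lemma commute_from_deltas:
  assumes "finite K" "f \<in> grp_alg K" "\<And>k. k \<in> K \<Longrightarrow> delta k \<star> a = a \<star> delta k"
  shows "f \<star> a = a \<star> f"
proof -
  have "f \<star> a = (\<Sum>k\<in>K. smul (f k) (delta k \<star> a))"
    by (subst expand_deltas[OF assms(1,2)]) (simp add: conv_sum_left conv_smul_left)
  also have "\<dots> = (\<Sum>k\<in>K. smul (f k) (a \<star> delta k))" using assms(3) by simp
  also have "\<dots> = a \<star> f"
    by (subst (2) expand_deltas[OF assms(1,2)]) (simp add: conv_sum_right conv_smul_right)
  finally show ?thesis .
qed

lemma abelian_grp_alg_commute:
  assumes K: "subgroup K G" and ab: "abelian G K" and f: "f \<in> grp_alg K" and g: "g \<in> grp_alg K"
  shows "f \<star> g = g \<star> f"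
proof (rule commute_from_deltas[OF subgroup_finite[OF K] f])
  fix k assume k: "k \<in> K"
  show "delta k \<star> g = g \<star> delta k"
  proof (rule sym, rule commute_from_deltas[OF subgroup_finite[OF K] g])
    fix l assume l: "l \<in> K"
    have "k \<in> carrier G" "l \<in> carrier G" using k l K subgroup.subset by blast+
    moreover have "l \<otimes> k = k \<otimes> l" using ab k l unfolding abelian_def by blast
    ultimately show "delta l \<star> delta k = delta k \<star> delta l" by (simp add: delta_mult)
  qed
qed

section \<open>Spectral projections of a single group element\<close>

text \<open>The order m = |G| is positive; it serves as exponent of G.\<close>
lemma order_pos: "order G > 0"
  using fin by (simp add: order_gt_0_iff_finite)

text \<open>With m = |G| and \<omega> an m-th root of unity, P i = (1/m) \<Sum>j<m. \<omega>^(-ij) \<delta>(k^j) lies in the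
  \<omega>^i-eigenspace of left multiplication by \<delta>(k); for primitive \<omega> these are orthogonal
  idempotents summing to 1.\<close>
definition eig_proj :: "complex \<Rightarrow> 'a \<Rightarrow> nat \<Rightarrow> ('a \<Rightarrow> complex)" where
  "eig_proj \<omega> k i =
     (\<Sum>j\<in>{..<order G}. smul ((inverse \<omega>) ^ (i * j) / of_nat (order G)) (delta (k [^] j)))"

lemma subgroup_nat_pow_closed: "subgroup K G \<Longrightarrow> k \<in> K \<Longrightarrow> k [^] (j::nat) \<in> K"
  by (induction j) (auto simp: subgroup.one_closed subgroup.m_closed)

lemma eig_proj_grp_alg: "subgroup K G \<Longrightarrow> k \<in> K \<Longrightarrow> eig_proj \<omega> k i \<in> grp_alg K"
  unfolding eig_proj_def by (intro grp_alg_sum grp_alg_smul delta_grp_alg subgroup_nat_pow_closed)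

text \<open>The eigenvector property: multiplying by \<delta>(k) shifts the summation index,
  which is periodic mod m because k^m = 1 and \<omega>^m = 1.\<close>
lemma eig_proj_eigen:
  assumes k: "k \<in> carrier G" and \<omega>: "\<omega> ^ order G = 1"
  shows "delta k \<star> eig_proj \<omega> k i = smul (\<omega> ^ i) (eig_proj \<omega> k i)"
proof -
  let ?m = "order G"
  define F where "F j = smul ((inverse \<omega>) ^ (i * j) / of_nat ?m) (delta (k [^] j))" for j
  have w0: "\<omega> \<noteq> 0" using \<omega> order_pos by (metis power_0_left zero_neq_one gr_implies_not0)
  have step: "delta k \<star> F j = smul (\<omega> ^ i) (F (Suc j))" for j
  proof -
    have "\<omega> ^ i * (inverse \<omega>) ^ (i * Suc j) = (\<omega> ^ i * (inverse \<omega>) ^ i) * (inverse \<omega>) ^ (i * j)"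
      by (simp add: power_add mult_ac)
    also have "\<omega> ^ i * (inverse \<omega>) ^ i = 1" using w0 by (simp add: power_inverse)
    finally have "(inverse \<omega>) ^ (i * j) = \<omega> ^ i * (inverse \<omega>) ^ (i * Suc j)" by simp
    moreover have "k \<otimes> k [^] j = k [^] Suc j" using k by (simp only: nat_pow_Suc2)
    ultimately show ?thesis using k unfolding F_def
      by (simp add: conv_smul_right delta_mult mult.assoc del: nat_pow_Suc)
  qed
  have period: "F ?m = F 0"
    using k \<omega> by (simp add: F_def pow_order_eq_1 power_mult power_inverse mult.commute[of i])
  have shift: "(\<Sum>j\<in>{..<?m}. F (Suc j)) = (\<Sum>j\<in>{..<?m}. F j)"
    using sum.lessThan_Suc_shift[of F ?m] sum.lessThan_Suc[of F ?m] period by (simp add: add.commute)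
  have "delta k \<star> eig_proj \<omega> k i = (\<Sum>j\<in>{..<?m}. smul (\<omega> ^ i) (F (Suc j)))"
    unfolding eig_proj_def F_def[symmetric] conv_sum_right step ..
  also have "\<dots> = smul (\<omega> ^ i) (eig_proj \<omega> k i)"
    unfolding eig_proj_def F_def[symmetric] smul_sum[symmetric] shift ..
  finally show ?thesis .
qed

lemma eig_proj_pow_eigen:
  assumes k: "k \<in> carrier G" and \<omega>: "\<omega> ^ order G = 1"
  shows "delta (k [^] j) \<star> eig_proj \<omega> k i = smul (\<omega> ^ (i * j)) (eig_proj \<omega> k i)"
proof (induction j)
  case 0 thus ?case using eig_proj_grp_alg[OF subgroup_self k] by (simp add: conv_one_left)
next
  case (Suc j)
  have "delta (k [^] Suc j) \<star> eig_proj \<omega> k i = delta (k [^] j) \<star> (delta k \<star> eig_proj \<omega> k i)"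
    using k by (simp add: delta_mult conv_assoc[symmetric])
  also have "\<dots> = smul (\<omega> ^ (i * Suc j)) (eig_proj \<omega> k i)"
    by (simp only: eig_proj_eigen[OF k \<omega>] conv_smul_right Suc smul_smul) (simp add: power_add)
  finally show ?case .
qed

text \<open>Orthogonality: P i \<star> P i' is (1/m) \<Sum>j<m. (\<omega>^(i'-i))^j times P i', a geometric sum
  that vanishes unless i = i'.\<close>
lemma eig_proj_orth:
  assumes k: "k \<in> carrier G" and \<omega>: "prim_root (order G) \<omega>" and i: "i < order G" "i' < order G"
  shows "eig_proj \<omega> k i \<star> eig_proj \<omega> k i' = (if i = i' then eig_proj \<omega> k i else 0)"
proof -
  let ?m = "order G" and ?P = "eig_proj \<omega> k i'" and ?q = "\<omega> ^ i' * inverse (\<omega> ^ i)"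
  have wm: "\<omega> ^ ?m = 1" using \<omega> by (simp add: prim_root_def)
  have w0: "\<omega> \<noteq> 0" using prim_root_nonzero[OF \<omega> order_pos] .
  have "eig_proj \<omega> k i \<star> ?P =
      (\<Sum>j\<in>{..<?m}. smul ((inverse \<omega>) ^ (i * j) / of_nat ?m) (smul (\<omega> ^ (i' * j)) ?P))"
    unfolding eig_proj_def[of _ _ i] conv_sum_left conv_smul_left eig_proj_pow_eigen[OF k wm] ..
  also have "\<dots> = smul ((\<Sum>j\<in>{..<?m}. ?q ^ j) / of_nat ?m) ?P"
    by (simp add: sum_smul sum_divide_distrib power_mult power_mult_distrib power_inverse mult.commute
        flip: power_mult)
  also have "\<dots> = (if i = i' then ?P else 0)"
  proof (cases "i = i'")
    case True thus ?thesis using w0 order_pos by simp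
  next
    case False
    have "?q \<noteq> 1"
    proof
      assume "?q = 1"
      hence "\<omega> ^ i = \<omega> ^ i'" using w0 by (simp add: field_simps)
      thus False using prim_root_pow_inj[OF \<omega> i] False by simp
    qed
    moreover have "?q ^ ?m = 1"
      using pow_root_of_unity[OF wm, of i] pow_root_of_unity[OF wm, of i']
      by (simp add: power_mult_distrib power_inverse)
    ultimately show ?thesis using False root_of_unity_geometric_sum by simp
  qed
  finally show ?thesis by simp
qed

text \<open>Completeness: in \<Sum>i P i the coefficient of \<delta>(k^j) is a geometric sum, zero for j \<noteq> 0.\<close>
lemma eig_proj_sum:
  assumes \<omega>: "prim_root (order G) \<omega>"
  shows "(\<Sum>i\<in>{..<order G}. eig_proj \<omega> k i) = delta \<one>"
proof -
  let ?m = "order G"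
  have wm: "\<omega> ^ ?m = 1" using \<omega> by (simp add: prim_root_def)
  have w0: "\<omega> \<noteq> 0" using prim_root_nonzero[OF \<omega> order_pos] .
  have "(\<Sum>i\<in>{..<?m}. eig_proj \<omega> k i) =
      (\<Sum>j\<in>{..<?m}. smul ((\<Sum>i\<in>{..<?m}. ((inverse \<omega>) ^ j) ^ i) / of_nat ?m) (delta (k [^] j)))"
    unfolding eig_proj_def
    by (subst sum.swap) (simp add: sum_smul sum_divide_distrib power_mult mult.commute flip: power_mult)
  also have "\<dots> = (\<Sum>j\<in>{..<?m}. if j = 0 then delta \<one> else 0)"
  proof (intro sum.cong refl)
    fix j assume j: "j \<in> {..<?m}"
    show "smul ((\<Sum>i\<in>{..<?m}. ((inverse \<omega>) ^ j) ^ i) / of_nat ?m) (delta (k [^] j))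
        = (if j = 0 then delta \<one> else 0)"
    proof (cases "j = 0")
      case True thus ?thesis using order_pos by simp
    next
      case False
      have "(inverse \<omega>) ^ j \<noteq> 1" using \<omega> False j w0 by (simp add: power_inverse prim_root_def)
      moreover have "((inverse \<omega>) ^ j) ^ ?m = 1"
        using pow_root_of_unity[OF wm, of j] by (simp add: power_inverse)
      ultimately show ?thesis using False root_of_unity_geometric_sum by simp
    qed
  qed
  also have "\<dots> = delta \<one>" using order_pos by (simp add: sum.delta)
  finally show ?thesis .
qed

section \<open>Idempotent eigenbases of abelian subgroups\<close>

definition idem_system :: "'a set \<Rightarrow> ('a \<Rightarrow> complex) set \<Rightarrow> bool" where
  "idem_system K E \<longleftrightarrow> finite E \<and> E \<subseteq> grp_alg K \<and> 0 \<notin> E \<and> (\<forall>e\<in>E. e \<star> e = e)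
     \<and> (\<forall>e\<in>E. \<forall>e'\<in>E. e \<noteq> e' \<longrightarrow> e \<star> e' = 0) \<and> (\<Sum>e\<in>E. e) = delta \<one>"

definition eigen_system :: "'a set \<Rightarrow> 'a set \<Rightarrow> ('a \<Rightarrow> complex) set \<Rightarrow> bool" where
  "eigen_system K S E \<longleftrightarrow> idem_system K E \<and> (\<forall>k\<in>S. \<forall>e\<in>E. \<exists>c. delta k \<star> e = smul c e)"

lemma idem_system_component:
  assumes "idem_system K E" "f \<in> CG" "f \<noteq> 0"
  shows "\<exists>e\<in>E. f \<star> e \<noteq> 0"
proof -
  have "f = (\<Sum>e\<in>E. f \<star> e)"
    using assms by (simp add: idem_system_def conv_one_right flip: conv_sum_right)
  thus ?thesis using assms(3) sum_nonzero_term by metis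
qed

text \<open>An indexed family of pairwise orthogonal idempotents of C[K] summing to 1 becomes a
  complete system once zeros (and thereby repetitions) are discarded.\<close>
lemma idem_system_of_family:
  assumes A: "finite A" and hK: "\<And>a. a \<in> A \<Longrightarrow> h a \<in> grp_alg K"
    and prod: "\<And>a b. a \<in> A \<Longrightarrow> b \<in> A \<Longrightarrow> h a \<star> h b = (if a = b then h a else 0)"
    and tot: "(\<Sum>a\<in>A. h a) = delta \<one>"
  shows "idem_system K (h ` A - {0})"
proof -
  have "(\<Sum>x\<in>h ` A - {0}. x) = (\<Sum>x\<in>h ` A. x)"
    using sum.setdiff_irrelevant[of "h ` A" "\<lambda>x. x"] A by simp
  also have "\<dots> = (\<Sum>a\<in>A. h a)"
  proof (subst sum.reindex_nontrivial[OF A])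
    fix a b assume "a \<in> A" "b \<in> A" "a \<noteq> b" "h a = h b"
    thus "h a = 0" using prod[of a a] prod[of a b] by simp
  qed simp
  finally have sum: "(\<Sum>x\<in>h ` A - {0}. x) = delta \<one>" using tot by simp
  show ?thesis
    unfolding idem_system_def
  proof (intro conjI ballI impI)
    show "finite (h ` A - {0})" using A by simp
    show "h ` A - {0} \<subseteq> grp_alg K" using hK by auto
    show "0 \<notin> h ` A - {0}" by simp
  next
    fix x assume "x \<in> h ` A - {0}"
    then obtain a where "a \<in> A" "x = h a" by auto
    thus "x \<star> x = x" using prod by simp
  next
    fix x y assume "x \<in> h ` A - {0}" "y \<in> h ` A - {0}" "x \<noteq> y"
    then obtain a b where "a \<in> A" "x = h a" "b \<in> A" "y = h b" by auto
    thus "x \<star> y = 0" using prod \<open>x \<noteq> y\<close> by auto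
  qed (rule sum)
qed

lemma idem_system_refine:
  assumes K: "subgroup K G" and ab: "abelian G K" and E: "idem_system K E" and I: "finite I"
    and PK: "\<And>i. i \<in> I \<Longrightarrow> P i \<in> grp_alg K"
    and orth: "\<And>i i'. i \<in> I \<Longrightarrow> i' \<in> I \<Longrightarrow> P i \<star> P i' = (if i = i' then P i else 0)"
    and tot: "(\<Sum>i\<in>I. P i) = delta \<one>"
  shows "idem_system K ((\<lambda>(e, i). e \<star> P i) ` (E \<times> I) - {0})"
proof -
  define h where "h = (\<lambda>(e, i). e \<star> P i)"
  have EK: "e \<in> grp_alg K" if "e \<in> E" for e using E that by (auto simp: idem_system_def)
  have prod: "h a \<star> h b = (if a = b then h a else 0)" if a: "a \<in> E \<times> I" and b: "b \<in> E \<times> I" for a b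
  proof -
    obtain e i e' i' where ab_eq: "a = (e, i)" "b = (e', i')"
      and mem: "e \<in> E" "i \<in> I" "e' \<in> E" "i' \<in> I"
      using a b by auto
    have "h a \<star> h b = (e \<star> e') \<star> (P i \<star> P i')"
      unfolding ab_eq h_def
      by (simp add: conv_swap_middle[OF abelian_grp_alg_commute[OF K ab PK[OF mem(2)] EK[OF mem(3)]]])
    also have "\<dots> = (if a = b then h a else 0)"
    proof (cases "e = e'")
      case False
      hence "e \<star> e' = 0" using E mem by (simp add: idem_system_def)
      thus ?thesis using False ab_eq by simp
    next
      case True
      have "e \<star> e = e" using E mem by (simp add: idem_system_def)
      thus ?thesis using True orth[OF mem(2,4)] ab_eq by (simp add: h_def)
    qed
    finally show ?thesis .
  qed
  have "(\<Sum>a\<in>E \<times> I. h a) = (\<Sum>e\<in>E. e \<star> (\<Sum>i\<in>I. P i))"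
    by (simp add: h_def sum.cartesian_product conv_sum_right)
  also have "\<dots> = (\<Sum>e\<in>E. e)"
    using EK grp_alg_CG[OF K] by (intro sum.cong refl) (simp add: tot conv_one_right)
  also have "\<dots> = delta \<one>" using E by (simp add: idem_system_def)
  finally have "(\<Sum>a\<in>E \<times> I. h a) = delta \<one>" .
  moreover have "finite (E \<times> I)" using E I by (simp add: idem_system_def)
  moreover have "h a \<in> grp_alg K" if "a \<in> E \<times> I" for a
    using that PK EK by (auto simp: h_def intro!: conv_grp_alg[OF K])
  ultimately show ?thesis
    unfolding h_def[symmetric] using prod by (intro idem_system_of_family) auto
qed

lemma eigen_system_insert:
  assumes K: "subgroup K G" and ab: "abelian G K" and k: "k \<in> K" and E: "eigen_system K S E"
  shows "\<exists>E'. eigen_system K (insert k S) E'"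
proof -
  obtain \<omega> where \<omega>: "prim_root (order G) \<omega>" using prim_root_exists[OF order_pos] by blast
  have kG: "k \<in> carrier G" using K k subgroup.subset by blast
  let ?P = "eig_proj \<omega> k" and ?I = "{..<order G}"
  define E' where "E' = (\<lambda>(e, i). e \<star> ?P i) ` (E \<times> ?I) - {0}"
  have E'_sys: "idem_system K E'"
    unfolding E'_def using E
    by (intro idem_system_refine[OF K ab] eig_proj_grp_alg[OF K k] eig_proj_orth[OF kG \<omega>]
        eig_proj_sum[OF \<omega>]) (auto simp: eigen_system_def)
  have "\<exists>c. delta k' \<star> x = smul c x" if k': "k' \<in> insert k S" and x: "x \<in> E'" for k' x
  proof -
    obtain e i where ei: "e \<in> E" "i \<in> ?I" "x = e \<star> ?P i" using x by (auto simp: E'_def)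
    show ?thesis
    proof (cases "k' \<in> S")
      case True
      then obtain c where "delta k' \<star> e = smul c e" using E ei unfolding eigen_system_def by blast
      hence "delta k' \<star> x = smul c x" by (simp add: ei(3) conv_smul_left flip: conv_assoc)
      thus ?thesis ..
    next
      case False
      have eK: "e \<in> grp_alg K" using E ei by (auto simp: eigen_system_def idem_system_def)
      have comm: "e \<star> ?P i = ?P i \<star> e"
        by (rule abelian_grp_alg_commute[OF K ab eK eig_proj_grp_alg[OF K k]])
      have wm: "\<omega> ^ order G = 1" using \<omega> by (simp add: prim_root_def)
      have "delta k \<star> x = smul (\<omega> ^ i) x"
        unfolding ei(3) comm by (simp add: eig_proj_eigen[OF kG wm] conv_smul_left flip: conv_assoc)
      thus ?thesis using False k' by auto
    qed
  qed
  thus ?thesis using E'_sys unfolding eigen_system_def by blast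
qed

lemma eigen_system_exists:
  assumes K: "subgroup K G" and ab: "abelian G K"
  shows "\<exists>E. eigen_system K K E"
proof -
  have "\<exists>E. eigen_system K S E" if "finite S" "S \<subseteq> K" for S
    using that
  proof (induction S rule: finite_induct)
    case empty
    have "eigen_system K {} {delta \<one>}"
      using subgroup.one_closed[OF K] delta_one_nonzero
      by (simp add: eigen_system_def idem_system_def delta_grp_alg delta_mult)
    thus ?case by blast
  next
    case (insert x F)
    thus ?case using eigen_system_insert[OF K ab] by blast
  qed
  thus ?thesis using subgroup_finite[OF K] by blast
qed

lemma eigen_system_eigenvector:
  assumes K: "subgroup K G" and E: "eigen_system K K E" and a: "a \<in> grp_alg K" and e: "e \<in> E"
  shows "\<exists>c. a \<star> e = smul c e"
proof -
  have "\<forall>k\<in>K. \<exists>c. delta k \<star> e = smul c e" using E e by (simp add: eigen_system_def)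
  then obtain c where c: "\<forall>k\<in>K. delta k \<star> e = smul (c k) e" by metis
  have "a \<star> e = (\<Sum>k\<in>K. smul (a k) (delta k)) \<star> e"
    using expand_deltas[OF subgroup_finite[OF K] a] by (rule arg_cong[where f = "\<lambda>x. x \<star> e"])
  also have "\<dots> = (\<Sum>k\<in>K. smul (a k) (smul (c k) e))"
    unfolding conv_sum_left conv_smul_left using c by (intro sum.cong refl) simp
  also have "\<dots> = smul (\<Sum>k\<in>K. a k * c k) e" by (simp add: sum_smul)
  finally show ?thesis ..
qed

text \<open>An eigen-system for K satisfies the defining properties of an idempotent eigenbasis:
  it is linearly independent by orthogonality and spanning since f = \<Sum>e. f \<star> e.\<close>
lemma eigen_system_is_idem_eigenbasis:
  assumes K: "subgroup K G" and E: "eigen_system K K E"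
  shows "is_idem_eigenbasis G K E"
proof -
  have finE: "finite E" and EK: "E \<subseteq> grp_alg K" and nz: "0 \<notin> E"
    and idem: "\<forall>e\<in>E. e \<star> e = e" and orth: "\<forall>e\<in>E. \<forall>e'\<in>E. e \<noteq> e' \<longrightarrow> e \<star> e' = 0"
    and tot: "(\<Sum>e\<in>E. e) = delta \<one>"
    using E by (auto simp: eigen_system_def idem_system_def)
  have indep: "\<forall>b\<in>E. c b = 0" if "lin_comb E c = (\<lambda>_. 0)" for c
  proof
    fix b assume b: "b \<in> E"
    have "0 = lin_comb E c \<star> b" using that by (simp add: zero_fun_def)
    also have "\<dots> = (\<Sum>e\<in>E. smul (c e) (e \<star> b))"
      by (simp add: lin_comb_eq conv_sum_left conv_smul_left)
    also have "\<dots> = smul (c b) (b \<star> b)" using finE b orth by (intro sum_single) auto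
    also have "\<dots> = smul (c b) b" using idem b by simp
    finally have "smul (c b) b = smul 0 b" by simp
    moreover have "b \<noteq> 0" using nz b by blast
    ultimately show "c b = 0" using smul_cancel by blast
  qed
  have span: "\<exists>c. f = lin_comb E c" if f: "f \<in> grp_alg K" for f
  proof -
    obtain c where c: "\<forall>e\<in>E. f \<star> e = smul (c e) e"
      using eigen_system_eigenvector[OF K E f] by metis
    have "f = (\<Sum>e\<in>E. f \<star> e)"
      using grp_alg_CG[OF K f] by (simp add: conv_one_right tot flip: conv_sum_right)
    also have "\<dots> = lin_comb E c" using c by (simp add: lin_comb_eq)
    finally show ?thesis by blast
  qed
  have eigen: "\<exists>c::complex. a \<star> b = (\<lambda>x. c * b x)" if "b \<in> E" "a \<in> grp_alg K" for a b
    using eigen_system_eigenvector[OF K E that(2,1)] by (simp add: smul_def)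
  show ?thesis
    unfolding is_idem_eigenbasis_def is_basis_alg_def
    using finE EK indep span eigen idem orth by (auto simp: zero_fun_def)
qed

lemma idem_eigenbasis_nonzero:
  assumes B: "is_idem_eigenbasis G K B" and b: "b \<in> B"
  shows "b \<noteq> 0"
proof
  assume b0: "b = 0"
  have "finite B" using B by (simp add: is_idem_eigenbasis_def is_basis_alg_def)
  hence "lin_comb B (\<lambda>x. if x = b then 1 else 0) = smul 1 b"
    unfolding lin_comb_eq using b by (subst sum_single[where b=b]) auto
  hence "lin_comb B (\<lambda>x. if x = b then 1 else 0) = (\<lambda>_. 0)" using b0 by (simp add: zero_fun_def)
  hence "(\<lambda>x. if x = b then 1 else (0::complex)) b = 0"
    using B b unfolding is_idem_eigenbasis_def is_basis_alg_def by blast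
  thus False by simp
qed

text \<open>Every member b of an idempotent eigenbasis B of C[K] belongs to a given eigen-system E:
  b has a nonzero component b \<star> e, a multiple of e; as also e \<star> b is a multiple of b,
  e is a nonzero idempotent multiple of b, hence e = b.\<close>
lemma idem_eigenbasis_subset:
  assumes K: "subgroup K G" and ab: "abelian G K" and E: "eigen_system K K E"
    and B: "is_idem_eigenbasis G K B" and b: "b \<in> B"
  shows "b \<in> E"
proof -
  have ES: "idem_system K E" using E by (simp add: eigen_system_def)
  have bK: "b \<in> grp_alg K" and bb: "b \<star> b = b"
    using B b by (auto simp: is_idem_eigenbasis_def is_basis_alg_def)
  have bnz: "b \<noteq> 0" using idem_eigenbasis_nonzero[OF B b] .
  obtain e where e: "e \<in> E" "b \<star> e \<noteq> 0"
    using idem_system_component[OF ES grp_alg_CG[OF K bK] bnz] by blast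
  have eK: "e \<in> grp_alg K" and ee: "e \<star> e = e" and enz: "e \<noteq> 0"
    using ES e(1) by (auto simp: idem_system_def)
  obtain \<mu> where mu: "b \<star> e = smul \<mu> e" using eigen_system_eigenvector[OF K E bK e(1)] by blast
  have "\<exists>\<nu>. e \<star> b = (\<lambda>x. \<nu> * b x)" using B b eK by (simp add: is_idem_eigenbasis_def)
  then obtain \<nu> where nu: "e \<star> b = smul \<nu> b" by (auto simp: smul_def)
  have mu0: "\<mu> \<noteq> 0" using e(2) mu by auto
  have "smul \<mu> e = smul \<nu> b" using mu nu abelian_grp_alg_commute[OF K ab bK eK] by simp
  hence e_eq: "e = smul (\<nu> / \<mu>) b"
    using mu0 smul_smul[of "1 / \<mu>" \<mu> e] smul_smul[of "1 / \<mu>" \<nu> b] by simp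
  hence "\<nu> / \<mu> = 0 \<or> \<nu> / \<mu> = 1" using smul_idem_cases[OF bnz bb, of "\<nu> / \<mu>"] ee by blast
  thus ?thesis using e_eq enz e(1) by auto
qed

text \<open>Uniqueness: an idempotent eigenbasis B of C[K] equals any eigen-system E, since an
  e \<in> E outside B \<subseteq> E would be orthogonal to its own expansion in B.\<close>
lemma idem_eigenbasis_unique:
  assumes K: "subgroup K G" and ab: "abelian G K" and E: "eigen_system K K E"
    and B: "is_idem_eigenbasis G K B"
  shows "B = E"
proof -
  have EK: "E \<subseteq> grp_alg K" and nz: "0 \<notin> E"
    and idem: "\<forall>e\<in>E. e \<star> e = e" and orth: "\<forall>e\<in>E. \<forall>e'\<in>E. e \<noteq> e' \<longrightarrow> e \<star> e' = 0"
    using E by (auto simp: eigen_system_def idem_system_def)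
  have Bspan: "\<forall>f\<in>grp_alg K. \<exists>c. f = lin_comb B c"
    using B by (simp add: is_idem_eigenbasis_def is_basis_alg_def)
  have BE: "B \<subseteq> E" using idem_eigenbasis_subset[OF K ab E B] by blast
  have "e \<in> B" if e: "e \<in> E" for e
  proof (rule ccontr)
    assume nb: "e \<notin> B"
    obtain c where c: "e = lin_comb B c" using Bspan EK e by blast
    have "e = e \<star> e" using idem e by simp
    also have "\<dots> = (\<Sum>b\<in>B. smul (c b) (e \<star> b))"
      by (subst (2) c) (simp add: lin_comb_eq conv_sum_right conv_smul_right)
    also have "\<dots> = 0"
    proof (intro sum.neutral ballI)
      fix b assume "b \<in> B"
      hence "b \<in> E" "b \<noteq> e" using BE nb by auto
      thus "smul (c b) (e \<star> b) = 0" using orth e by simp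
    qed
    finally show False using nz e by simp
  qed
  thus ?thesis using BE by blast
qed

lemma idem_eigenbasis_eq:
  assumes K: "subgroup K G" and ab: "abelian G K" and E: "eigen_system K K E"
  shows "idem_eigenbasis G K = E"
  unfolding idem_eigenbasis_def
  by (rule the_equality[where P = "is_idem_eigenbasis G K",
        OF eigen_system_is_idem_eigenbasis[OF K E] idem_eigenbasis_unique[OF K ab E]])

lemma idem_eigenbasis_system:
  assumes K: "subgroup K G" and ab: "abelian G K"
  shows "eigen_system K K (idem_eigenbasis G K)"
proof -
  obtain E where "eigen_system K K E" using eigen_system_exists[OF K ab] by blast
  thus ?thesis using idem_eigenbasis_eq[OF K ab] by simp
qed

section \<open>Conjugation as an algebra automorphism\<close>

abbreviation cj :: "'a \<Rightarrow> ('a \<Rightarrow> complex) \<Rightarrow> ('a \<Rightarrow> complex)" where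
  "cj h f \<equiv> conj_alg G h f"

lemma cj_def: "cj h f = (delta h \<star> f) \<star> delta (inv h)"
  by (simp add: conj_alg_def)

lemma cj_apply:
  assumes "h \<in> carrier G" "x \<in> carrier G"
  shows "cj h f x = f (inv h \<otimes> x \<otimes> h)"
  using assms by (simp add: cj_def conv_delta_right conv_delta_left m_assoc)

lemma cj_mult:
  assumes h: "h \<in> carrier G"
  shows "cj h (a \<star> b) = cj h a \<star> cj h b"
proof -
  have "cj h a \<star> cj h b = (delta h \<star> a) \<star> ((delta (inv h) \<star> delta h) \<star> (b \<star> delta (inv h)))"
    by (simp add: cj_def conv_assoc)
  also have "\<dots> = (delta h \<star> a) \<star> (b \<star> delta (inv h))"
    using h by (simp add: delta_mult conv_one_left conv_CG)
  also have "\<dots> = cj h (a \<star> b)" by (simp add: cj_def conv_assoc)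
  finally show ?thesis by simp
qed

lemma cj_comp:
  assumes "g \<in> carrier G" "h \<in> carrier G"
  shows "cj g (cj h f) = cj (g \<otimes> h) f"
proof -
  have "cj g (cj h f) = ((delta g \<star> delta h) \<star> f) \<star> (delta (inv h) \<star> delta (inv g))"
    by (simp add: cj_def conv_assoc)
  also have "\<dots> = cj (g \<otimes> h) f" using assms by (simp add: cj_def delta_mult inv_mult_group)
  finally show ?thesis .
qed

lemma cj_one: "f \<in> CG \<Longrightarrow> cj \<one> f = f"
  by (simp add: cj_def conv_one_left conv_one_right conv_CG)

lemma cj_inv: "h \<in> carrier G \<Longrightarrow> f \<in> CG \<Longrightarrow> cj (inv h) (cj h f) = f"
  by (simp add: cj_comp cj_one)

lemma cj_zero [simp]: "cj h 0 = 0"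
  by (simp add: cj_def)

lemma cj_smul: "cj h (smul c f) = smul c (cj h f)"
  by (simp add: cj_def conv_smul_left conv_smul_right)

lemma cj_sum: "cj h (\<Sum>i\<in>I. F i) = (\<Sum>i\<in>I. cj h (F i))"
  by (simp add: cj_def conv_sum_left conv_sum_right)

lemma cj_delta: "h \<in> carrier G \<Longrightarrow> k \<in> carrier G \<Longrightarrow> cj h (delta k) = delta (h \<otimes> k \<otimes> inv h)"
  by (simp add: cj_def delta_mult)

lemma delta_move: "h \<in> carrier G \<Longrightarrow> f \<in> CG \<Longrightarrow> delta h \<star> f = cj h f \<star> delta h"
  by (simp add: cj_def conv_assoc delta_mult conv_one_right conv_CG)

lemma cj_commuting:
  assumes "h \<in> carrier G" "f \<in> CG" "delta h \<star> f = f \<star> delta h"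
  shows "cj h f = f"
  using assms by (simp add: cj_def conv_assoc delta_mult conv_one_right)

lemma cj_normal:
  assumes N: "N \<lhd> G" and h: "h \<in> carrier G" and f: "f \<in> grp_alg N"
  shows "cj h f \<in> grp_alg N"
  unfolding grp_alg_def mem_Collect_eq
proof (intro allI impI)
  fix x assume x: "x \<notin> N"
  show "cj h f x = 0"
  proof (cases "x \<in> carrier G")
    case False thus ?thesis by (simp add: cj_def conv_out)
  next
    case True
    have "inv h \<otimes> x \<otimes> h \<notin> N"
    proof
      assume "inv h \<otimes> x \<otimes> h \<in> N"
      hence "h \<otimes> (inv h \<otimes> x \<otimes> h) \<otimes> inv h \<in> N" using normal.inv_op_closed2[OF N h] by blast
      moreover have "h \<otimes> (inv h \<otimes> x \<otimes> h) \<otimes> inv h = x" using h True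
        by (simp add: m_assoc[symmetric]) (simp add: m_assoc)
      ultimately show False using x by simp
    qed
    thus ?thesis using f h True by (simp add: cj_apply grp_alg_def)
  qed
qed

lemma cj_idem_system:
  assumes N: "N \<lhd> G" and h: "h \<in> carrier G" and E: "idem_system N E"
  shows "idem_system N (cj h ` E)"
proof -
  have NS: "subgroup N G" using N normal_imp_subgroup by blast
  have finE: "finite E" and EK: "E \<subseteq> grp_alg N" and nz: "0 \<notin> E"
    and idem: "\<forall>e\<in>E. e \<star> e = e" and orth: "\<forall>e\<in>E. \<forall>e'\<in>E. e \<noteq> e' \<longrightarrow> e \<star> e' = 0"
    and tot: "(\<Sum>e\<in>E. e) = delta \<one>"
    using E by (auto simp: idem_system_def)
  have EG: "e \<in> CG" if "e \<in> E" for e using that EK grp_alg_CG[OF NS] by blast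
  have inj: "inj_on (cj h) E" by (rule inj_onI) (metis cj_inv h EG)
  show ?thesis
    unfolding idem_system_def
  proof (intro conjI ballI impI)
    show "finite (cj h ` E)" using finE by simp
    show "cj h ` E \<subseteq> grp_alg N" using EK cj_normal[OF N h] by blast
    show "0 \<notin> cj h ` E"
    proof
      assume "0 \<in> cj h ` E"
      then obtain e where "e \<in> E" "cj h e = 0" by auto
      hence "e = 0" using cj_inv[OF h EG[of e]] by simp
      thus False using nz \<open>e \<in> E\<close> by simp
    qed
  next
    fix x assume "x \<in> cj h ` E"
    then obtain e where "e \<in> E" "x = cj h e" by auto
    thus "x \<star> x = x" using idem h by (simp add: cj_mult[symmetric])
  next
    fix x y assume "x \<in> cj h ` E" "y \<in> cj h ` E" "x \<noteq> y"
    then obtain e e' where "e \<in> E" "x = cj h e" "e' \<in> E" "y = cj h e'" by auto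
    thus "x \<star> y = 0" using orth h \<open>x \<noteq> y\<close> by (cases "e = e'") (auto simp: cj_mult[symmetric])
  next
    have "(\<Sum>x\<in>cj h ` E. x) = cj h (\<Sum>e\<in>E. e)" using inj by (simp add: sum.reindex cj_sum)
    thus "(\<Sum>x\<in>cj h ` E. x) = delta \<one>" using h by (simp add: tot cj_delta)
  qed
qed

text \<open>The eigenvector property is transported as well: \<delta>(k) acts on cj h e as
  \<delta>(h^-1 k h) acts on e.\<close>
lemma cj_eigen_system:
  assumes N: "N \<lhd> G" and h: "h \<in> carrier G" and E: "eigen_system N N E"
  shows "eigen_system N N (cj h ` E)"
proof -
  have eig: "\<forall>k\<in>N. \<forall>e\<in>E. \<exists>c. delta k \<star> e = smul c e" using E by (simp add: eigen_system_def)
  have "\<exists>c. delta k \<star> x = smul c x" if k: "k \<in> N" and x: "x \<in> cj h ` E" for k x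
  proof -
    obtain e where e: "e \<in> E" "x = cj h e" using x by auto
    have kG: "k \<in> carrier G" using k N normal_imp_subgroup subgroup.subset by blast
    have k': "inv h \<otimes> k \<otimes> h \<in> N" using normal.inv_op_closed1[OF N h k] .
    obtain c where c: "delta (inv h \<otimes> k \<otimes> h) \<star> e = smul c e" using eig k' e by blast
    have "cj h (delta (inv h \<otimes> k \<otimes> h)) = delta k"
      using h kG by (simp add: cj_delta m_assoc[symmetric]) (simp add: m_assoc)
    hence "delta k \<star> x = cj h (delta (inv h \<otimes> k \<otimes> h) \<star> e)" using h by (simp add: cj_mult e)
    also have "\<dots> = smul c x" using c e by (simp add: cj_smul)
    finally show ?thesis ..
  qed
  moreover have "idem_system N (cj h ` E)"
    using cj_idem_system[OF N h] E by (simp add: eigen_system_def)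
  ultimately show ?thesis by (simp add: eigen_system_def)
qed

lemma cj_permutes_idem_eigenbasis:
  assumes N: "N \<lhd> G" and ab: "abelian G N" and h: "h \<in> carrier G"
  shows "cj h ` idem_eigenbasis G N = idem_eigenbasis G N"
proof -
  have NS: "subgroup N G" using N normal_imp_subgroup by blast
  have "eigen_system N N (cj h ` idem_eigenbasis G N)"
    by (rule cj_eigen_system[OF N h idem_eigenbasis_system[OF NS ab]])
  from idem_eigenbasis_eq[OF NS ab this] show ?thesis by (rule sym)
qed

section \<open>Central idempotents\<close>

lemma central_idem_iff:
  "central_idem G J \<longleftrightarrow> J \<in> CG \<and> J \<star> J = J \<and> (\<forall>a\<in>CG. a \<star> J = J \<star> a)"
  by (simp add: central_idem_def)

lemma central_idem_mult:
  assumes I: "central_idem G I" and J: "central_idem G J"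
  shows "central_idem G (I \<star> J)"
proof -
  have II: "I \<star> I = I" and Ic: "\<forall>a\<in>CG. a \<star> I = I \<star> a"
    and JG: "J \<in> CG" and JJ: "J \<star> J = J" and Jc: "\<forall>a\<in>CG. a \<star> J = J \<star> a"
    using I J central_idem_iff by auto
  have JI: "J \<star> I = I \<star> J" using Ic JG by simp
  show ?thesis unfolding central_idem_iff
  proof (intro conjI ballI)
    show "I \<star> J \<in> CG" by (rule conv_CG)
    show "(I \<star> J) \<star> (I \<star> J) = I \<star> J" by (simp only: conv_swap_middle[OF JI] II JJ)
    fix a assume a: "a \<in> CG"
    have "a \<star> (I \<star> J) = I \<star> (a \<star> J)" using Ic a by (simp only: conv_assoc[symmetric])
    also have "\<dots> = (I \<star> J) \<star> a" using Jc a by (simp only: conv_assoc)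
    finally show "a \<star> (I \<star> J) = (I \<star> J) \<star> a" .
  qed
qed

text \<open>A nonzero central idempotent J below a primitive one P (P J = J) equals P, since
  otherwise P = J + (P - J) would be a decomposition.\<close>
lemma primitive_central_idem_below:
  assumes P: "primitive_central_idem G P" and J: "central_idem G J" and Jnz: "J \<noteq> 0"
    and PJ: "P \<star> J = J"
  shows "P = J"
proof -
  have PG: "P \<in> CG" and PP: "P \<star> P = P" and Pc: "\<forall>a\<in>CG. a \<star> P = P \<star> a"
    and JG: "J \<in> CG" and JJ: "J \<star> J = J" and Jc: "\<forall>a\<in>CG. a \<star> J = J \<star> a"
    using P J by (auto simp: primitive_central_idem_def central_idem_iff)
  have JP: "J \<star> P = P \<star> J" using Pc JG by simp
  define I where "I = P - J"
  have "central_idem G I" unfolding central_idem_iff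
  proof (intro conjI ballI)
    show "I \<in> CG" unfolding I_def using PG JG by (rule grp_alg_diff)
    show "I \<star> I = I" unfolding I_def conv_diff_left conv_diff_right PP PJ JP JJ by simp
    fix a assume "a \<in> CG"
    thus "a \<star> I = I \<star> a" unfolding I_def conv_diff_left conv_diff_right using Pc Jc by simp
  qed
  moreover have "J \<star> I = (\<lambda>_. 0)" "I \<star> J = (\<lambda>_. 0)"
    unfolding I_def conv_diff_left conv_diff_right PJ JP JJ by (simp_all add: zero_fun_def)
  moreover have "P = (\<lambda>x. J x + I x)" by (simp add: I_def)
  moreover have "J \<noteq> (\<lambda>_. 0)" using Jnz by (simp add: zero_fun_def)
  ultimately have "I = (\<lambda>_. 0)" using P J unfolding primitive_central_idem_def by blast
  thus ?thesis by (simp add: I_def fun_eq_iff)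
qed


end

section \<open>Semidirect products of finite abelian groups\<close>

locale abelian_semidirect = group_algebra G for G :: "('a, 'b) monoid_scheme" (structure) +
  fixes N H :: "'a set"
  assumes N_normal: "N \<lhd> G" and H_subgroup: "subgroup H G" and N_inter_H: "N \<inter> H = {\<one>}"
    and N_H_generate: "N <#> H = carrier G" and N_abelian: "abelian G N" and H_abelian: "abelian G H"
begin

abbreviation PN where "PN \<equiv> idem_eigenbasis G N"
abbreviation orbit where "orbit v \<equiv> conj_orbit G H v"
abbreviation stab where "stab v \<equiv> orbit_stab G H (orbit v)"
abbreviation UU where "UU v \<equiv> idem_eigenbasis G (stab v)"

definition orbit_idem :: "('a \<Rightarrow> complex) \<Rightarrow> ('a \<Rightarrow> complex) \<Rightarrow> ('a \<Rightarrow> complex)" where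
  "orbit_idem v u = (\<Sum>w\<in>orbit v. w \<star> u)"

lemma N_subgroup: "subgroup N G" using N_normal normal_imp_subgroup by blast
lemma H_carrier: "h \<in> H \<Longrightarrow> h \<in> carrier G" using H_subgroup subgroup.subset by blast
lemma N_carrier: "n \<in> N \<Longrightarrow> n \<in> carrier G" using N_subgroup subgroup.subset by blast

lemma decompose:
  assumes "g \<in> carrier G"
  obtains n h where "n \<in> N" "h \<in> H" "g = n \<otimes> h"
  using assms N_H_generate[symmetric] unfolding set_mult_def by auto

lemma PN_system: "eigen_system N N PN"
  using idem_eigenbasis_system[OF N_subgroup N_abelian] .

lemma PN_grp_alg: "w \<in> PN \<Longrightarrow> w \<in> grp_alg N"
  and PN_nonzero: "w \<in> PN \<Longrightarrow> w \<noteq> 0"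
  and PN_idem: "w \<in> PN \<Longrightarrow> w \<star> w = w"
  and PN_orth: "w \<in> PN \<Longrightarrow> w' \<in> PN \<Longrightarrow> w \<noteq> w' \<Longrightarrow> w \<star> w' = 0"
  and PN_eigen: "w \<in> PN \<Longrightarrow> n \<in> N \<Longrightarrow> \<exists>c. delta n \<star> w = smul c w"
  using PN_system unfolding eigen_system_def idem_system_def by blast+

lemma PN_CG: "w \<in> PN \<Longrightarrow> w \<in> CG"
  using PN_grp_alg grp_alg_CG[OF N_subgroup] by blast

lemma PN_conj: "h \<in> carrier G \<Longrightarrow> w \<in> PN \<Longrightarrow> cj h w \<in> PN"
  using cj_permutes_idem_eigenbasis[OF N_normal N_abelian] by blast

lemma PN_right_eigen:
  assumes w: "w \<in> PN" and n: "n \<in> N"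
  obtains c where "delta n \<star> w = smul c w" "w \<star> delta n = smul c w"
proof -
  obtain c where c: "delta n \<star> w = smul c w" using PN_eigen[OF w n] by blast
  moreover have "delta n \<star> w = w \<star> delta n"
    using abelian_grp_alg_commute[OF N_subgroup N_abelian delta_grp_alg[OF n] PN_grp_alg[OF w]] .
  ultimately show ?thesis using that by simp
qed

lemma orbit_subset: "v \<in> PN \<Longrightarrow> orbit v \<subseteq> PN"
  using PN_conj H_carrier by (auto simp: conj_orbit_def)

lemma orbit_self: "v \<in> PN \<Longrightarrow> v \<in> orbit v"
  unfolding conj_orbit_def using subgroup.one_closed[OF H_subgroup] cj_one[OF PN_CG] by force

lemma orbit_finite: "finite (orbit v)"
  using subgroup_finite[OF H_subgroup] by (simp add: conj_orbit_def)

lemma orbit_cases: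
  assumes "w \<in> orbit v"
  obtains h where "h \<in> H" "w = cj h v"
  using assms by (auto simp: conj_orbit_def)

lemma stab_subset: "stab v \<subseteq> H"
  by (auto simp: orbit_stab_def)

lemma stab_fixes: "s \<in> stab v \<Longrightarrow> w \<in> orbit v \<Longrightarrow> cj s w = w"
  by (simp add: orbit_stab_def)

lemma stab_subgroup:
  assumes v: "v \<in> PN"
  shows "subgroup (stab v) G"
proof (rule subgroupI)
  show "stab v \<subseteq> carrier G" using stab_subset H_carrier by blast
  have "\<one> \<in> stab v" unfolding orbit_stab_def
    using subgroup.one_closed[OF H_subgroup] cj_one PN_CG orbit_subset[OF v] by blast
  thus "stab v \<noteq> {}" by blast
next
  fix a assume a: "a \<in> stab v"
  have aG: "a \<in> carrier G" using a stab_subset H_carrier by blast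
  have "cj (inv a) w = w" if w: "w \<in> orbit v" for w
  proof -
    have "cj (inv a) w = cj (inv a) (cj a w)" using stab_fixes[OF a w] by simp
    also have "\<dots> = w" using cj_inv[OF aG] PN_CG w orbit_subset[OF v] by blast
    finally show ?thesis .
  qed
  thus "inv a \<in> stab v"
    using a stab_subset subgroup.m_inv_closed[OF H_subgroup] by (auto simp: orbit_stab_def)
next
  fix a b assume a: "a \<in> stab v" and b: "b \<in> stab v"
  have "a \<in> carrier G" "b \<in> carrier G" using a b stab_subset H_carrier by blast+
  hence "cj (a \<otimes> b) w = w" if w: "w \<in> orbit v" for w
    using cj_comp stab_fixes[OF a w] stab_fixes[OF b w] by metis
  thus "a \<otimes> b \<in> stab v"
    using a b stab_subset subgroup.m_closed[OF H_subgroup] by (auto simp: orbit_stab_def)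
qed

lemma stab_abelian: "abelian G (stab v)"
  using H_abelian stab_subset by (auto simp: abelian_def)

lemma UU_system: "v \<in> PN \<Longrightarrow> eigen_system (stab v) (stab v) (UU v)"
  using idem_eigenbasis_system[OF stab_subgroup stab_abelian] .

lemma UU_grp_alg: "v \<in> PN \<Longrightarrow> u \<in> UU v \<Longrightarrow> u \<in> grp_alg (stab v)"
  and UU_nonzero: "v \<in> PN \<Longrightarrow> u \<in> UU v \<Longrightarrow> u \<noteq> 0"
  and UU_idem: "v \<in> PN \<Longrightarrow> u \<in> UU v \<Longrightarrow> u \<star> u = u"
  using UU_system unfolding eigen_system_def idem_system_def by blast+

lemma UU_grp_alg_H: "v \<in> PN \<Longrightarrow> u \<in> UU v \<Longrightarrow> u \<in> grp_alg H"
  using UU_grp_alg grp_alg_mono[OF stab_subset] by blast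

lemma cj_H_fixes:
  assumes h: "h \<in> H" and u: "u \<in> grp_alg H"
  shows "cj h u = u"
  by (rule cj_commuting[OF H_carrier[OF h] grp_alg_CG[OF H_subgroup u]
        abelian_grp_alg_commute[OF H_subgroup H_abelian delta_grp_alg[OF h] u]])

text \<open>An element fixing v fixes its whole orbit, as H is abelian.\<close>
lemma stab_iff:
  assumes v: "v \<in> PN" and h: "h \<in> H" and hv: "cj h v = v"
  shows "h \<in> stab v"
proof -
  have "cj h w = w" if w: "w \<in> orbit v" for w
  proof -
    obtain h' where h': "h' \<in> H" "w = cj h' v" using w by (rule orbit_cases)
    have "cj h w = cj (h \<otimes> h') v" using cj_comp H_carrier h h' by simp
    also have "h \<otimes> h' = h' \<otimes> h" using H_abelian h h' by (simp add: abelian_def)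
    also have "cj (h' \<otimes> h) v = cj h' (cj h v)" using cj_comp H_carrier h h' by simp
    finally show ?thesis using hv h' by simp
  qed
  thus ?thesis using h by (auto simp: orbit_stab_def)
qed

lemma orbit_permuted:
  assumes v: "v \<in> PN" and h: "h \<in> H"
  shows "inj_on (cj h) (orbit v)" and "cj h ` orbit v = orbit v"
proof -
  have hG: "h \<in> carrier G" using H_carrier[OF h] .
  show "inj_on (cj h) (orbit v)"
    by (rule inj_onI) (metis cj_inv hG PN_CG orbit_subset[OF v] subsetD)
  have conj_orbit: "cj h (cj h' v) = cj (h \<otimes> h') v" if "h' \<in> H" for h'
    using cj_comp hG H_carrier that by simp
  show "cj h ` orbit v = orbit v"
  proof
    show "cj h ` orbit v \<subseteq> orbit v"
      using conj_orbit h subgroup.m_closed[OF H_subgroup] by (auto simp: conj_orbit_def)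
    show "orbit v \<subseteq> cj h ` orbit v"
    proof
      fix x assume "x \<in> orbit v"
      then obtain h' where h': "h' \<in> H" "x = cj h' v" by (rule orbit_cases)
      have ih: "inv h \<otimes> h' \<in> H"
        using h h' H_subgroup by (simp add: subgroup.m_closed subgroup.m_inv_closed)
      have "h \<otimes> (inv h \<otimes> h') = h'" using hG H_carrier h' by (simp add: m_assoc[symmetric])
      hence "x = cj h (cj (inv h \<otimes> h') v)" using h' conj_orbit[OF ih] by simp
      moreover have "cj (inv h \<otimes> h') v \<in> orbit v" using ih by (auto simp: conj_orbit_def)
      ultimately show "x \<in> cj h ` orbit v" by blast
    qed
  qed
qed

text \<open>The orbit elements commute with C[stab v]: each \<delta>(s), s \<in> stab v, conjugates them trivially.\<close>
lemma orbit_commute_stab: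
  assumes v: "v \<in> PN" and w: "w \<in> orbit v" and u: "u \<in> grp_alg (stab v)"
  shows "w \<star> u = u \<star> w"
proof -
  have wP: "w \<in> PN" using w orbit_subset[OF v] by blast
  have "delta s \<star> w = w \<star> delta s" if s: "s \<in> stab v" for s
  proof -
    have "s \<in> carrier G" using s stab_subset H_carrier by blast
    thus ?thesis using delta_move[OF _ PN_CG[OF wP]] stab_fixes[OF s w] by simp
  qed
  hence "u \<star> w = w \<star> u" by (rule commute_from_deltas[OF subgroup_finite[OF stab_subgroup[OF v]] u])
  thus ?thesis by simp
qed

lemma orbit_idem_CG: "orbit_idem v u \<in> CG"
  unfolding orbit_idem_def by (intro grp_alg_sum conv_CG)

text \<open>Each term w \<star> u commutes with \<delta>(n), n \<in> N: both sides are c (w \<star> u).\<close>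
lemma orbit_term_commute_N:
  assumes v: "v \<in> PN" and w: "w \<in> orbit v" and n: "n \<in> N" and u: "u \<in> grp_alg (stab v)"
  shows "delta n \<star> (w \<star> u) = (w \<star> u) \<star> delta n"
proof -
  have wP: "w \<in> PN" using w orbit_subset[OF v] by blast
  obtain c where c: "delta n \<star> w = smul c w" "w \<star> delta n = smul c w"
    using PN_right_eigen[OF wP n] by blast
  have "delta n \<star> (w \<star> u) = smul c w \<star> u" by (simp only: conv_assoc[symmetric] c)
  also have "\<dots> = smul c (w \<star> u)" by (rule conv_smul_left)
  also have "\<dots> = smul c (u \<star> w)" by (simp only: orbit_commute_stab[OF v w u])
  also have "\<dots> = u \<star> (w \<star> delta n)" by (simp only: c conv_smul_right)
  also have "\<dots> = (w \<star> u) \<star> delta n" by (simp only: conv_assoc orbit_commute_stab[OF v w u])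
  finally show ?thesis .
qed

lemma orbit_idem_commute_N:
  assumes v: "v \<in> PN" and n: "n \<in> N" and u: "u \<in> grp_alg (stab v)"
  shows "delta n \<star> orbit_idem v u = orbit_idem v u \<star> delta n"
  unfolding orbit_idem_def conv_sum_left conv_sum_right
  using orbit_term_commute_N[OF v _ n u] by simp

text \<open>Conjugation by h \<in> H permutes the terms w \<star> u.\<close>
lemma orbit_idem_commute_H:
  assumes v: "v \<in> PN" and h: "h \<in> H" and u: "u \<in> grp_alg (stab v)"
  shows "delta h \<star> orbit_idem v u = orbit_idem v u \<star> delta h"
proof -
  have hG: "h \<in> carrier G" using H_carrier[OF h] .
  have uH: "u \<in> grp_alg H" using u grp_alg_mono[OF stab_subset] by blast
  have "delta h \<star> orbit_idem v u = (\<Sum>w\<in>orbit v. (cj h w \<star> u) \<star> delta h)"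
    unfolding orbit_idem_def conv_sum_right
    using delta_move[OF hG conv_CG] cj_mult[OF hG] cj_H_fixes[OF h uH] by simp
  also have "\<dots> = (\<Sum>w\<in>cj h ` orbit v. (w \<star> u) \<star> delta h)"
    using orbit_permuted(1)[OF v h] by (simp add: sum.reindex)
  also have "\<dots> = orbit_idem v u \<star> delta h"
    using orbit_permuted(2)[OF v h] by (simp add: orbit_idem_def conv_sum_left)
  finally show ?thesis .
qed

text \<open>Since G = NH, orbit_idem v u is central.\<close>
lemma orbit_idem_central:
  assumes v: "v \<in> PN" and u: "u \<in> grp_alg (stab v)" and a: "a \<in> CG"
  shows "a \<star> orbit_idem v u = orbit_idem v u \<star> a"
proof (rule commute_from_deltas[OF fin a])
  fix g assume "g \<in> carrier G"
  then obtain n h where nh: "n \<in> N" "h \<in> H" "g = n \<otimes> h" by (rule decompose)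
  let ?J = "orbit_idem v u"
  have g: "delta g = delta n \<star> delta h" using nh N_carrier H_carrier by (simp add: delta_mult)
  have "delta g \<star> ?J = delta n \<star> (delta h \<star> ?J)" by (simp only: g conv_assoc)
  also have "\<dots> = (delta n \<star> ?J) \<star> delta h"
    by (simp only: orbit_idem_commute_H[OF v nh(2) u] conv_assoc)
  also have "\<dots> = ?J \<star> delta g" by (simp only: orbit_idem_commute_N[OF v nh(1) u] g conv_assoc)
  finally show "delta g \<star> ?J = ?J \<star> delta g" .
qed

lemma orbit_idem_absorbs:
  assumes v: "v \<in> PN" and u: "u \<in> UU v" and w: "w \<in> orbit v"
  shows "orbit_idem v u \<star> (w \<star> u) = w \<star> u"
proof -
  have uS: "u \<in> grp_alg (stab v)" using UU_grp_alg[OF v u] .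
  have "orbit_idem v u \<star> (w \<star> u) = (\<Sum>w'\<in>orbit v. (w' \<star> w) \<star> (u \<star> u))"
    unfolding orbit_idem_def conv_sum_left
    by (simp only: conv_swap_middle[OF orbit_commute_stab[OF v w uS, symmetric]])
  also have "\<dots> = (w \<star> w) \<star> (u \<star> u)"
  proof (rule sum_single[OF orbit_finite w])
    fix x assume "x \<in> orbit v" "x \<noteq> w"
    hence "x \<star> w = 0" using PN_orth w orbit_subset[OF v] by blast
    thus "(x \<star> w) \<star> (u \<star> u) = 0" by simp
  qed
  also have "\<dots> = w \<star> u" using PN_idem UU_idem[OF v u] orbit_subset[OF v] w by auto
  finally show ?thesis .
qed

lemma orbit_idem_idem:
  assumes v: "v \<in> PN" and u: "u \<in> UU v"
  shows "orbit_idem v u \<star> orbit_idem v u = orbit_idem v u"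
  using orbit_idem_absorbs[OF v u] by (simp add: orbit_idem_def[of v u] conv_sum_right)

text \<open>Since G = NH with N \<inter> H = 1, the product of w \<in> C[N] and u \<in> C[H] is their tensor
  product: (w \<star> u)(nh) = w(n) u(h).\<close>
lemma conv_N_H_apply:
  assumes w: "w \<in> grp_alg N" and u: "u \<in> grp_alg H" and n: "n \<in> N" and h: "h \<in> H"
  shows "(w \<star> u) (n \<otimes> h) = w n * u h"
proof -
  have nG: "n \<in> carrier G" and hG: "h \<in> carrier G" using N_carrier[OF n] H_carrier[OF h] .
  have vanish: "u (inv y \<otimes> (n \<otimes> h)) = 0" if y: "y \<in> N" "y \<noteq> n" for y
  proof -
    have yG: "y \<in> carrier G" using N_carrier[OF y(1)] .
    have "inv y \<otimes> (n \<otimes> h) \<notin> H"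
    proof
      assume "inv y \<otimes> (n \<otimes> h) \<in> H"
      hence "inv y \<otimes> (n \<otimes> h) \<otimes> inv h \<in> H"
        using h H_subgroup by (simp add: subgroup.m_closed subgroup.m_inv_closed)
      moreover have "inv y \<otimes> (n \<otimes> h) \<otimes> inv h = inv y \<otimes> n" using yG nG hG by (simp add: m_assoc)
      moreover have "inv y \<otimes> n \<in> N"
        using y n N_subgroup by (simp add: subgroup.m_closed subgroup.m_inv_closed)
      ultimately have "inv y \<otimes> n = \<one>" using N_inter_H by auto
      hence "y \<otimes> (inv y \<otimes> n) = y" using yG by simp
      moreover have "y \<otimes> (inv y \<otimes> n) = n" using yG nG by (simp add: m_assoc[symmetric])
      ultimately have "n = y" by simp
      thus False using y by simp
    qed
    thus ?thesis using u by (simp add: grp_alg_def)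
  qed
  have "(w \<star> u) (n \<otimes> h) = (\<Sum>y\<in>carrier G. w y * u (inv y \<otimes> (n \<otimes> h)))"
    using nG hG by (simp add: conv_in)
  also have "\<dots> = w n * u (inv n \<otimes> (n \<otimes> h))"
    using vanish w by (intro sum_single[OF fin nG]) (auto simp: grp_alg_def)
  also have "\<dots> = w n * u h" using nG hG by (simp add: m_assoc[symmetric])
  finally show ?thesis .
qed

lemma orbit_term_nonzero:
  assumes v: "v \<in> PN" and w: "w \<in> PN" and u: "u \<in> UU v"
  shows "w \<star> u \<noteq> 0"
proof -
  have wN: "w \<in> grp_alg N" and uH: "u \<in> grp_alg H"
    using PN_grp_alg[OF w] UU_grp_alg_H[OF v u] .
  obtain n where n: "w n \<noteq> 0" using PN_nonzero[OF w] by (auto simp: fun_eq_iff)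
  obtain h where h: "u h \<noteq> 0" using UU_nonzero[OF v u] by (auto simp: fun_eq_iff)
  have "n \<in> N" "h \<in> H" using n h wN uH by (auto simp: grp_alg_def)
  hence "(w \<star> u) (n \<otimes> h) \<noteq> 0" using conv_N_H_apply[OF wN uH] n h by simp
  thus ?thesis by auto
qed

text \<open>orbit_idem v u \<noteq> 0, since it acts as the identity on v \<star> u \<noteq> 0.\<close>
lemma orbit_idem_nonzero:
  assumes v: "v \<in> PN" and u: "u \<in> UU v"
  shows "orbit_idem v u \<noteq> 0"
  using orbit_idem_absorbs[OF v u orbit_self[OF v]] orbit_term_nonzero[OF v v u] by auto

section \<open>Primitivity of the orbit idempotents\<close>

text \<open>For v \<in> P_N and g = n h, the sandwich (v \<delta>(g) v) u is a multiple of v u: it vanishes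
  unless h fixes v, and then h lies in stab v and \<delta>(h) acts on u by a scalar.\<close>
lemma sandwich_scalar:
  assumes v: "v \<in> PN" and u: "u \<in> UU v" and g: "g \<in> carrier G"
  shows "\<exists>l. ((v \<star> delta g) \<star> v) \<star> u = smul l (v \<star> u)"
proof -
  obtain n h where nh: "n \<in> N" "h \<in> H" "g = n \<otimes> h" using g by (rule decompose)
  have nG: "n \<in> carrier G" and hG: "h \<in> carrier G" using N_carrier[OF nh(1)] H_carrier[OF nh(2)] .
  obtain c where c: "v \<star> delta n = smul c v" using PN_right_eigen[OF v nh(1)] by metis
  have "delta g = delta n \<star> delta h" using nG hG nh(3) by (simp add: delta_mult)
  hence "(v \<star> delta g) \<star> v = (v \<star> delta n) \<star> (delta h \<star> v)" by (simp add: conv_assoc)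
  also have "\<dots> = smul c (v \<star> (cj h v \<star> delta h))"
    by (simp only: c delta_move[OF hG PN_CG[OF v]] conv_smul_left)
  finally have sandwich: "(v \<star> delta g) \<star> v = smul c ((v \<star> cj h v) \<star> delta h)"
    by (simp add: conv_assoc)
  show ?thesis
  proof (cases "cj h v = v")
    case True
    hence "h \<in> stab v" by (rule stab_iff[OF v nh(2)])
    then obtain e where e: "delta h \<star> u = smul e u"
      using eigen_system_eigenvector[OF stab_subgroup[OF v] UU_system[OF v] delta_grp_alg u] by blast
    have "((v \<star> delta g) \<star> v) \<star> u = smul c (v \<star> (delta h \<star> u))"
      using sandwich True PN_idem[OF v] by (simp add: conv_assoc conv_smul_left)
    also have "\<dots> = smul (c * e) (v \<star> u)" by (simp add: e conv_smul_right)
    finally show ?thesis by blast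
  next
    case False
    hence "v \<star> cj h v = 0" using PN_orth[OF v PN_conj[OF hG v]] by auto
    hence "((v \<star> delta g) \<star> v) \<star> u = smul 0 (v \<star> u)" using sandwich by simp
    thus ?thesis by blast
  qed
qed

text \<open>Every central element z acts on orbit_idem v u by a scalar: on v u this follows from
  z v = v z v and the previous lemma, and conjugating by h \<in> H transports it to each w u.\<close>
lemma central_acts_by_scalar:
  assumes v: "v \<in> PN" and u: "u \<in> UU v" and z: "z \<in> CG" and zc: "\<forall>a\<in>CG. a \<star> z = z \<star> a"
  shows "\<exists>\<mu>. z \<star> orbit_idem v u = smul \<mu> (orbit_idem v u)"
proof -
  have uH: "u \<in> grp_alg H" using UU_grp_alg_H[OF v u] .
  obtain l where l: "\<forall>g\<in>carrier G. ((v \<star> delta g) \<star> v) \<star> u = smul (l g) (v \<star> u)"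
    using sandwich_scalar[OF v u] by metis
  define \<mu> where "\<mu> = (\<Sum>g\<in>carrier G. z g * l g)"
  have on_v: "z \<star> (v \<star> u) = smul \<mu> (v \<star> u)"
  proof -
    have idem: "z \<star> v = (z \<star> v) \<star> v" using PN_idem[OF v] by (simp add: conv_assoc)
    have comm: "z \<star> v = v \<star> z" using zc PN_CG[OF v] by simp
    have "z \<star> v = (v \<star> z) \<star> v" by (subst comm[symmetric]) (rule idem)
    hence "z \<star> (v \<star> u) = ((v \<star> z) \<star> v) \<star> u" by (simp add: conv_assoc[symmetric])
    also have "\<dots> = (\<Sum>g\<in>carrier G. smul (z g) (((v \<star> delta g) \<star> v) \<star> u))"
      by (subst expand_deltas[OF fin z])
        (simp add: conv_sum_right conv_sum_left conv_smul_left conv_smul_right)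
    also have "\<dots> = smul \<mu> (v \<star> u)" using l by (simp add: sum_smul \<mu>_def)
    finally show ?thesis .
  qed
  have "z \<star> (w \<star> u) = smul \<mu> (w \<star> u)" if w: "w \<in> orbit v" for w
  proof -
    obtain h where h: "h \<in> H" "w = cj h v" using w by (rule orbit_cases)
    have hG: "h \<in> carrier G" using H_carrier[OF h(1)] .
    have wu: "w \<star> u = cj h (v \<star> u)" using h cj_mult[OF hG] cj_H_fixes[OF h(1) uH] by simp
    have "cj h z = z" using cj_commuting[OF hG z] zc delta_grp_alg[OF hG] by simp
    hence "z \<star> (w \<star> u) = cj h (z \<star> (v \<star> u))" unfolding wu cj_mult[OF hG] by simp
    thus ?thesis unfolding on_v cj_smul wu .
  qed
  hence "z \<star> orbit_idem v u = smul \<mu> (orbit_idem v u)"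
    unfolding orbit_idem_def conv_sum_right smul_sum by simp
  thus ?thesis ..
qed

lemma orbit_idem_central_idem:
  assumes v: "v \<in> PN" and u: "u \<in> UU v"
  shows "central_idem G (orbit_idem v u)"
  unfolding central_idem_iff
  using orbit_idem_CG orbit_idem_idem[OF v u] orbit_idem_central[OF v UU_grp_alg[OF v u]] by blast

lemma central_idem_below:
  assumes v: "v \<in> PN" and u: "u \<in> UU v" and I: "central_idem G I"
    and IJ: "I \<star> orbit_idem v u = I"
  shows "I = 0 \<or> I = orbit_idem v u"
proof -
  let ?J = "orbit_idem v u"
  have I': "I \<in> CG" "I \<star> I = I" "\<forall>a\<in>CG. a \<star> I = I \<star> a" using I central_idem_iff by auto
  obtain \<mu> where mu: "I \<star> ?J = smul \<mu> ?J" using central_acts_by_scalar[OF v u I'(1,3)] by blast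
  have "smul \<mu> ?J \<star> smul \<mu> ?J = smul \<mu> ?J" using I'(2) IJ mu by simp
  hence "\<mu> = 0 \<or> \<mu> = 1"
    by (rule smul_idem_cases[OF orbit_idem_nonzero[OF v u] orbit_idem_idem[OF v u]])
  moreover have "I = smul \<mu> ?J" using IJ mu by simp
  ultimately show ?thesis by auto
qed

text \<open>orbit_idem v u is primitive: in a decomposition I1 + I2, I1 lies below it and is
  therefore 0 or all of it.\<close>
lemma orbit_idem_primitive:
  assumes v: "v \<in> PN" and u: "u \<in> UU v"
  shows "primitive_central_idem G (orbit_idem v u)"
proof -
  let ?J = "orbit_idem v u"
  have indecomposable: False
    if I1: "central_idem G I1" and "central_idem G I2" "I1 \<noteq> (\<lambda>_. 0)" "I2 \<noteq> (\<lambda>_. 0)"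
      "I1 \<star> I2 = (\<lambda>_. 0)" "?J = (\<lambda>x. I1 x + I2 x)" for I1 I2
  proof -
    have nz: "I1 \<noteq> 0" "I2 \<noteq> 0" and o12: "I1 \<star> I2 = 0" and J: "?J = I1 + I2"
      using that by (simp_all add: zero_fun_def plus_fun_def)
    have "I1 \<star> I1 = I1" using I1 central_idem_iff by blast
    hence "I1 \<star> ?J = I1" by (simp add: J conv_add_right o12)
    hence "I1 = 0 \<or> I1 = ?J" by (rule central_idem_below[OF v u I1])
    moreover have "I1 \<noteq> ?J" using nz(2) J by (auto simp: fun_eq_iff)
    ultimately show False using nz(1) by blast
  qed
  have "?J \<noteq> (\<lambda>_. 0)" using orbit_idem_nonzero[OF v u] by (simp add: zero_fun_def)
  thus ?thesis
    using orbit_idem_central_idem[OF v u] indecomposable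
    unfolding primitive_central_idem_def by blast
qed

text \<open>Conversely, a primitive central idempotent P has P v u \<noteq> 0 for some v \<in> P_N and
  u \<in> UU v; then P J = J for J = orbit_idem v u, and P - J is a central idempotent
  orthogonal to J, hence zero by primitivity.\<close>
lemma primitive_is_orbit_idem:
  assumes P: "primitive_central_idem G P"
  shows "\<exists>v\<in>PN. \<exists>u\<in>UU v. P = orbit_idem v u"
proof -
  have ci: "central_idem G P" and pnz: "P \<noteq> 0"
    using P by (auto simp: primitive_central_idem_def zero_fun_def)
  have PG: "P \<in> CG" using ci central_idem_iff by auto
  have "idem_system N PN" using PN_system by (simp add: eigen_system_def)
  then obtain v where v: "v \<in> PN" and pv: "P \<star> v \<noteq> 0"
    using idem_system_component[OF _ PG pnz] by blast
  have "idem_system (stab v) (UU v)" using UU_system[OF v] by (simp add: eigen_system_def)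
  then obtain u where u: "u \<in> UU v" and pvu: "(P \<star> v) \<star> u \<noteq> 0"
    using idem_system_component[OF _ conv_CG pv] by blast
  let ?J = "orbit_idem v u"
  have "(P \<star> v) \<star> u = (P \<star> ?J) \<star> (v \<star> u)"
    using orbit_idem_absorbs[OF v u orbit_self[OF v]] by (simp add: conv_assoc)
  hence "P \<star> ?J \<noteq> 0" using pvu by auto
  moreover have "central_idem G (P \<star> ?J)"
    by (rule central_idem_mult[OF ci orbit_idem_central_idem[OF v u]])
  moreover have "(P \<star> ?J) \<star> ?J = P \<star> ?J" by (simp add: conv_assoc orbit_idem_idem[OF v u])
  ultimately have "P \<star> ?J = ?J" using central_idem_below[OF v u] by blast
  hence "P = ?J"
    by (rule primitive_central_idem_below[OF P orbit_idem_central_idem[OF v u] orbit_idem_nonzero[OF v u]])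
  thus ?thesis using v u by blast
qed

lemma orbit_idems_eq_primitive:
  "{orbit_idem v u | v u. v \<in> PN \<and> u \<in> UU v} = {J. primitive_central_idem G J}"
proof (intro equalityI subsetI)
  fix J assume "J \<in> {orbit_idem v u | v u. v \<in> PN \<and> u \<in> UU v}"
  thus "J \<in> {J. primitive_central_idem G J}" using orbit_idem_primitive by blast
next
  fix J assume "J \<in> {J. primitive_central_idem G J}"
  thus "J \<in> {orbit_idem v u | v u. v \<in> PN \<and> u \<in> UU v}" using primitive_is_orbit_idem by blast
qed

end

theorem mainTheorem8:
  fixes G :: "('a, 'b) monoid_scheme" and N H :: "'a set"
  assumes "group G" and "finite (carrier G)"
    and "N \<lhd> G" and "subgroup H G"
    and "N \<inter> H = {\<one>\<^bsub>G\<^esub>}" and "N <#>\<^bsub>G\<^esub> H = carrier G"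
    and "\<forall>x\<in>N. \<forall>y\<in>N. x \<otimes>\<^bsub>G\<^esub> y = y \<otimes>\<^bsub>G\<^esub> x"
    and "\<forall>x\<in>H. \<forall>y\<in>H. x \<otimes>\<^bsub>G\<^esub> y = y \<otimes>\<^bsub>G\<^esub> x"
  shows "{(\<lambda>x. \<Sum>v\<in>Orb. conv G v u x) | Orb u.
            Orb \<in> conj_orbits G N H \<and> u \<in> idem_eigenbasis G (orbit_stab G H Orb)}
         = {J. primitive_central_idem G J}" (is "?A = _")
proof -
  interpret abelian_semidirect G N H
    using assms by (intro abelian_semidirect.intro abelian_semidirect_axioms.intro
        group_algebra.intro group_algebra_axioms.intro) (auto simp: abelian_def)
  have orbit_sum: "(\<lambda>x. \<Sum>w\<in>orbit v. conv G w u x) = orbit_idem v u" for v u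
    by (simp add: orbit_idem_def sum_fun_apply fun_eq_iff)
  have "?A = {orbit_idem v u | v u. v \<in> PN \<and> u \<in> UU v}"
    unfolding conj_orbits_def orbit_sum[symmetric] by blast
  thus ?thesis using orbit_idems_eq_primitive by simp
qed

end
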